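(* Let $m>n>0$ be relatively prime integers. Define $f_1(m,n)=(2m-n,m)$, $f_2(m,n)=(2m+n,m)$, $f_3(m,n)=(2n+m,n)$ and $g_1(u,v)=(-v,u+2v)$, $g_2(u,v)=(v,u-2v)$, $g_3(u,v)=(u,v-2u)$. Then for each $i\in\{1,2,3\}$, except in the single case $(m,n)=(2,1)$ and $i=1$, one has $$\beta(f_i(m,n))=g_i(\beta(m,n)).$$
   Context: For relatively prime integers $a>b>0$, the Bézout coefficients $\beta(a,b)$ are defined via the Euclidean algorithm $a=q_1b+r_1$, $b=q_2r_1+r_2$, $\dots$, $r_{k-2}=q_kr_{k-1}+r_k$ with $r_{k-1}=1$, $r_k=0$ (where $r_{-1}=a$, $r_0=b$): writing $\begin{pmatrix}a\\ b\end{pmatrix}=M\begin{pmatrix}1\\0\end{pmatrix}$ with $M=\begin{pmatrix}q_1&1\\1&0\end{pmatrix}\cdots\begin{pmatrix}q_k&1\\1&0\end{pmatrix}$, $\beta(a,b)=(r,s)$ is the first row of $M^{-1}$, so $ra+sb=1$. (Note each $f_i(m,n)$ again consists of relatively prime integers with first entry larger than second, both positive.) *)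

theory Defs
  imports "HOL-Analysis.Analysis"
begin

function euclid_quots :: "int \<Rightarrow> int \<Rightarrow> int list" where
  "euclid_quots a b = (if b \<le> 0 then [] else (a div b) # euclid_quots b (a mod b))"
  by auto
termination
  by (relation "Wellfounded.measure (\<lambda>(a, b). nat b)") auto

definition qmat :: "int \<Rightarrow> int^2^2" where
  "qmat q = vector [vector [q, 1], vector [1, 0]]"

definition euclid_matrix :: "int \<Rightarrow> int \<Rightarrow> int^2^2" where
  "euclid_matrix a b = foldr (\<lambda>q N. qmat q ** N) (euclid_quots a b) (mat 1)"

definition bezout :: "int \<Rightarrow> int \<Rightarrow> int \<times> int" where
  "bezout a b = (let Mi = (THE N. euclid_matrix a b ** N = mat 1 \<and> N ** euclid_matrix a b = mat 1)
                 in (Mi $ 1 $ 1, Mi $ 1 $ 2))"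

end

theory Submission
  imports Defs
begin

(* Everything follows from one step of the Euclidean algorithm: if a = q b + r with
   0 <= r < b and beta(b, r) = (x, y), then beta(a, b) = (y, x - q y), because
   M(a, b) = Q(q) M(b, r) and Q(q)^-1 = ((0, 1), (1, -q)). Hence adding k b to a only changes
   the second coefficient, beta(a + k b, b) = (x, y - k x) for beta(a, b) = (x, y), which
   settles f_2 and f_3 at once. For f_1 one writes 2m - n = m + (m - n) and relates
   beta(m, m - n) to beta(m, n) by comparing the first two division steps of both, according
   as m < 2n or m > 2n; m = 2n is excluded by coprimality unless (m, n) = (2, 1). *)

definition qmat_inv :: "int \<Rightarrow> int^2^2" where
  "qmat_inv q = vector [vector [0, 1], vector [1, -q]]"

lemma qmat_qmat_inv: "qmat q ** qmat_inv q = mat 1" "qmat_inv q ** qmat q = mat 1"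
  by (simp_all add: vec_eq_iff forall_2 matrix_matrix_mult_def sum_2 mat_def qmat_def qmat_inv_def)

definition euclid_matrix_inv :: "int \<Rightarrow> int \<Rightarrow> int^2^2" where
  "euclid_matrix_inv a b = foldr (\<lambda>q N. N ** qmat_inv q) (euclid_quots a b) (mat 1)"

lemma foldr_qmat_inverse:
  "foldr (\<lambda>q N. qmat q ** N) qs (mat 1) ** foldr (\<lambda>q N. N ** qmat_inv q) qs (mat 1) = mat 1 \<and>
   foldr (\<lambda>q N. N ** qmat_inv q) qs (mat 1) ** foldr (\<lambda>q N. qmat q ** N) qs (mat 1) = mat 1"
proof (induction qs)
  case Nil
  show ?case by simp
next
  case (Cons q qs)
  define P where "P = foldr (\<lambda>q N. qmat q ** N) qs (mat 1)"
  define R where "R = foldr (\<lambda>q N. N ** qmat_inv q) qs (mat 1)"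
  have PR: "P ** R = mat 1" and RP: "R ** P = mat 1"
    using Cons.IH unfolding P_def R_def by simp_all
  have "(qmat q ** P) ** (R ** qmat_inv q) = qmat q ** ((P ** R) ** qmat_inv q)"
    by (simp add: matrix_mul_assoc)
  also have "\<dots> = mat 1"
    by (simp add: PR qmat_qmat_inv)
  finally have left: "(qmat q ** P) ** (R ** qmat_inv q) = mat 1" .
  have "(R ** qmat_inv q) ** (qmat q ** P) = R ** ((qmat_inv q ** qmat q) ** P)"
    by (simp add: matrix_mul_assoc)
  also have "\<dots> = mat 1"
    by (simp add: RP qmat_qmat_inv)
  finally have right: "(R ** qmat_inv q) ** (qmat q ** P) = mat 1" .
  from left right show ?case unfolding P_def R_def by simp
qed

lemma the_two_sided_inverse:
  fixes M N :: "'a::semiring_1^'n^'n"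
  assumes "M ** N = mat 1" and "N ** M = mat 1"
  shows "(THE N. M ** N = mat 1 \<and> N ** M = mat 1) = N"
proof (rule the_equality)
  show "M ** N = mat 1 \<and> N ** M = mat 1" using assms ..
next
  fix N' assume "M ** N' = mat 1 \<and> N' ** M = mat 1"
  then show "N' = N"
    by (metis assms(2) matrix_mul_assoc matrix_mul_lid matrix_mul_rid)
qed

lemma bezout_eq_euclid_matrix_inv:
  "bezout a b = (euclid_matrix_inv a b $ 1 $ 1, euclid_matrix_inv a b $ 1 $ 2)"
proof -
  have inv: "(THE N. euclid_matrix a b ** N = mat 1 \<and> N ** euclid_matrix a b = mat 1)
             = euclid_matrix_inv a b"
    using the_two_sided_inverse foldr_qmat_inverse
    unfolding euclid_matrix_def euclid_matrix_inv_def by blast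
  show ?thesis unfolding bezout_def Let_def inv ..
qed

lemma euclid_quots_step: "b > 0 \<Longrightarrow> euclid_quots a b = (a div b) # euclid_quots b (a mod b)"
  by (subst euclid_quots.simps) simp

lemma bezout_step:
  assumes "b > 0"
  shows "bezout a b = (snd (bezout b (a mod b)),
                       fst (bezout b (a mod b)) - (a div b) * snd (bezout b (a mod b)))"
proof -
  have "euclid_matrix_inv a b = euclid_matrix_inv b (a mod b) ** qmat_inv (a div b)"
    using assms unfolding euclid_matrix_inv_def by (simp only: euclid_quots_step foldr_Cons o_apply)
  then show ?thesis
    by (simp add: bezout_eq_euclid_matrix_inv matrix_matrix_mult_def sum_2 qmat_inv_def)
qed

lemma bezout_div_step:
  assumes "0 \<le> r" and "r < b"
  shows "bezout (q * b + r) b = (snd (bezout b r), fst (bezout b r) - q * snd (bezout b r))"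
proof -
  have "(q * b + r) div b = q" "(q * b + r) mod b = r"
    using assms by (simp_all add: div_pos_pos_trivial mod_pos_pos_trivial)
  with bezout_step[of b "q * b + r"] assms show ?thesis by (simp only:)
qed

lemma bezout_add_mult:
  assumes "b > 0"
  shows "bezout (a + k * b) b = (fst (bezout a b), snd (bezout a b) - k * fst (bezout a b))"
proof -
  obtain x y where xy: "bezout b (a mod b) = (x, y)" by fastforce
  have "(a + k * b) div b = a div b + k" "(a + k * b) mod b = a mod b"
    using assms by simp_all
  then have "bezout (a + k * b) b = (y, x - (a div b + k) * y)"
    using bezout_step[OF assms, of "a + k * b"] xy by simp
  moreover have "bezout a b = (y, x - (a div b) * y)"
    using bezout_step[OF assms, of a] xy by simp
  ultimately show ?thesis by (simp add: algebra_simps)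
qed

lemma bezout_complement:
  fixes m n :: int
  assumes "0 < n" and "n < m" and "m \<noteq> 2 * n"
  shows "bezout m (m - n) = (fst (bezout m n) + snd (bezout m n), - snd (bezout m n))"
proof (cases "m < 2 * n")
  case True
  obtain x y where xy: "bezout n (m - n) = (x, y)" by fastforce
  have "bezout m n = bezout (1 * n + (m - n)) n" by simp
  also have "\<dots> = (y, x - y)"
    using bezout_div_step[of "m - n" n 1] True assms xy by simp
  finally have "bezout m n = (y, x - y)" .
  moreover have "bezout m (m - n) = (x, y - x)"
    using bezout_add_mult[of "m - n" n 1] assms xy by simp
  ultimately show ?thesis by simp
next
  case False
  obtain x y where xy: "bezout (m - n) n = (x, y)" by fastforce
  have "bezout m (m - n) = bezout (1 * (m - n) + n) (m - n)" by simp
  also have "\<dots> = (y, x - y)"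
    using bezout_div_step[of n "m - n" 1] False assms xy by simp
  finally have "bezout m (m - n) = (y, x - y)" .
  moreover have "bezout m n = (x, y - x)"
    using bezout_add_mult[of n "m - n" 1] assms xy by simp
  ultimately show ?thesis by simp
qed

theorem theorem1p5:
  fixes m n :: int
  assumes "m > n" and "n > 0" and "coprime m n"
  shows "(\<not> (m = 2 \<and> n = 1) \<longrightarrow>
           bezout (2*m - n) m = (- snd (bezout m n), fst (bezout m n) + 2 * snd (bezout m n)))
       \<and> bezout (2*m + n) m = (snd (bezout m n), fst (bezout m n) - 2 * snd (bezout m n))
       \<and> bezout (2*n + m) n = (fst (bezout m n), snd (bezout m n) - 2 * fst (bezout m n))"
proof (intro conjI impI)
  assume "\<not> (m = 2 \<and> n = 1)"
  with assms have "m \<noteq> 2 * n" by (auto simp: coprime_commute)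
  have "bezout (2*m - n) m = bezout (1 * m + (m - n)) m" by simp
  also have "\<dots> = (snd (bezout m (m - n)), fst (bezout m (m - n)) - snd (bezout m (m - n)))"
    using bezout_div_step[of "m - n" m 1] assms by simp
  finally show "bezout (2*m - n) m = (- snd (bezout m n), fst (bezout m n) + 2 * snd (bezout m n))"
    using bezout_complement[OF assms(2,1) \<open>m \<noteq> 2 * n\<close>] by simp
next
  show "bezout (2*m + n) m = (snd (bezout m n), fst (bezout m n) - 2 * snd (bezout m n))"
    using bezout_div_step[of n m 2] assms by simp
next
  show "bezout (2*n + m) n = (fst (bezout m n), snd (bezout m n) - 2 * fst (bezout m n))"
    using bezout_add_mult[of n m 2] assms by (simp add: add.commute)
qed

end
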